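(* Let $X$ be a geodesically complete locally compact CAT(0)-space and let $a\colon\mathbb R\to X$ be a complete geodesic. Then the sets $\omega^+(a)$ and $\omega^-(a)$ are at most countable.
   Context: $\Sigma_xX$ is the space of directions at $x$ (with the Alexandrov angle metric $\angle_x$); directions $\xi,\eta\in\Sigma_xX$ are mutually inverse if $\angle_x(\xi,\eta)=\pi$. $\omega^+(a)$ is the set of points $x\in a$ such that the direction at $x$ of the ray $[x\,a(+\infty)]$ has more than one inverse direction in $\Sigma_xX$; $\omega^-(a)$ is the set of points $x\in a$ such that the direction of the ray $[x\,a(-\infty)]$ has more than one inverse direction. *)

theory Defs
  imports "HOL-Analysis.Analysis"
begin

definition geodesic_segment :: "(real \<Rightarrow> 'a::metric_space) \<Rightarrow> 'a \<Rightarrow> 'a \<Rightarrow> bool" where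
  "geodesic_segment c x y \<longleftrightarrow> c 0 = x \<and> c (dist x y) = y \<and>
     (\<forall>s\<in>{0..dist x y}. \<forall>t\<in>{0..dist x y}. dist (c s) (c t) = \<bar>s - t\<bar>)"

definition complete_geodesic :: "(real \<Rightarrow> 'a::metric_space) \<Rightarrow> bool" where
  "complete_geodesic a \<longleftrightarrow> (\<forall>s t. dist (a s) (a t) = \<bar>s - t\<bar>)"

definition geodesic_space :: "'a::metric_space itself \<Rightarrow> bool" where
  "geodesic_space _ \<longleftrightarrow> (\<forall>x y::'a. \<exists>c. geodesic_segment c x y)"

definition cmp_side :: "complex \<Rightarrow> complex \<Rightarrow> real \<Rightarrow> complex" where
  "cmp_side P Q s = P + of_real (s / dist P Q) * (Q - P)"

definition CAT0 :: "'a::metric_space itself \<Rightarrow> bool" where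
  "CAT0 T \<longleftrightarrow> geodesic_space T \<and>
    (\<forall>(x::'a) y z g1 g2 g3 (X::complex) Y Z.
       geodesic_segment g1 x y \<and> geodesic_segment g2 y z \<and> geodesic_segment g3 z x \<and>
       dist X Y = dist x y \<and> dist Y Z = dist y z \<and> dist Z X = dist z x \<longrightarrow>
       (let sides = {(g1, cmp_side X Y, dist x y), (g2, cmp_side Y Z, dist y z),
                     (g3, cmp_side Z X, dist z x)}
        in \<forall>(c, C, l)\<in>sides. \<forall>(c', C', l')\<in>sides. \<forall>s\<in>{0..l}. \<forall>t\<in>{0..l'}.
             dist (c s) (c' t) \<le> dist (C s) (C' t)))"

definition geodesically_complete :: "'a::metric_space itself \<Rightarrow> bool" where
  "geodesically_complete _ \<longleftrightarrow>
     (\<forall>(x::'a) y c. geodesic_segment c x y \<longrightarrow>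
        (\<exists>a. complete_geodesic a \<and> (\<forall>s\<in>{0..dist x y}. a s = c s)))"

definition geodesic_from :: "'a::metric_space \<Rightarrow> (real \<Rightarrow> 'a) \<Rightarrow> bool" where
  "geodesic_from x c \<longleftrightarrow> c 0 = x \<and>
     (\<exists>e>0. \<forall>s\<in>{0..e}. \<forall>t\<in>{0..e}. dist (c s) (c t) = \<bar>s - t\<bar>)"

definition comparison_angle :: "'a::metric_space \<Rightarrow> 'a \<Rightarrow> 'a \<Rightarrow> real" where
  "comparison_angle x p q =
     arccos (((dist x p)\<^sup>2 + (dist x q)\<^sup>2 - (dist p q)\<^sup>2) / (2 * dist x p * dist x q))"

definition alex_angle :: "'a::metric_space \<Rightarrow> (real \<Rightarrow> 'a) \<Rightarrow> (real \<Rightarrow> 'a) \<Rightarrow> real" where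
  "alex_angle x c c' = (INF e\<in>{0<..}. Sup ((\<lambda>(s,t). comparison_angle x (c s) (c' t)) ` ({0<..e} \<times> {0<..e})))"

text \<open>The space of directions Sigma_x X is the metric completion of the space of geodesic
  directions (geodesics from x modulo angle zero) with respect to the angle metric.
  A point of the completion is represented by an angle-Cauchy sequence of geodesics from x.\<close>
definition angle_cauchy :: "'a::metric_space \<Rightarrow> (nat \<Rightarrow> real \<Rightarrow> 'a) \<Rightarrow> bool" where
  "angle_cauchy x \<eta> \<longleftrightarrow> (\<forall>n. geodesic_from x (\<eta> n)) \<and>
     (\<forall>e>0. \<exists>N. \<forall>m\<ge>N. \<forall>n\<ge>N. alex_angle x (\<eta> m) (\<eta> n) < e)"

text \<open>The direction of the geodesic \<xi> at x has more than one inverse direction in Sigma_x X: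
  there are two distinct points of the completion at angle pi from it.\<close>
definition several_inverses :: "'a::metric_space \<Rightarrow> (real \<Rightarrow> 'a) \<Rightarrow> bool" where
  "several_inverses x \<xi> \<longleftrightarrow>
     (\<exists>\<eta> \<eta>'. angle_cauchy x \<eta> \<and> angle_cauchy x \<eta>' \<and>
        (\<lambda>n. alex_angle x \<xi> (\<eta> n)) \<longlonglongrightarrow> pi \<and>
        (\<lambda>n. alex_angle x \<xi> (\<eta>' n)) \<longlonglongrightarrow> pi \<and>
        \<not> ((\<lambda>n. alex_angle x (\<eta> n) (\<eta>' n)) \<longlonglongrightarrow> 0))"

text \<open>omega^+(a): points x = a s of a where the direction of the ray [x a(+\<infinity>)],
  i.e. t \<mapsto> a (s + t), has more than one inverse direction; omega^-(a) likewise for the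
  ray [x a(-\<infinity>)], i.e. t \<mapsto> a (s - t).\<close>
definition omega_plus :: "(real \<Rightarrow> 'a::metric_space) \<Rightarrow> 'a set" where
  "omega_plus a = {x. \<exists>s. x = a s \<and> several_inverses x (\<lambda>t. a (s + t))}"

definition omega_minus :: "(real \<Rightarrow> 'a::metric_space) \<Rightarrow> 'a set" where
  "omega_minus a = {x. \<exists>s. x = a s \<and> several_inverses x (\<lambda>t. a (s - t))}"

end

theory Submission
  imports Defs
begin

text \<open>Let x = a s lie in omega^+(a). Two inverse directions of the forward ray at x that are at
  positive angle from each other are realised by geodesics from x that diverge linearly, so one
  of them, c, stays linearly far from the backward ray t \<mapsto> a (s - t) while still making an
  angle close to pi with the forward ray. CAT(0) comparison shows that two such branches issuing
  from different points a s < a s' of the line, with the same constants, are uniformly far apart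
  at a fixed time r. Local compactness then forbids the branch points to accumulate, so they are
  countable, and letting the constants run through 1 / (k + 1) exhausts omega^+(a). Reversing
  a gives omega^-(a).\<close>

section \<open>Comparison triangles\<close>

definition comparison_cos :: "'a::metric_space \<Rightarrow> 'a \<Rightarrow> 'a \<Rightarrow> real" where
  "comparison_cos x p q = ((dist x p)\<^sup>2 + (dist x q)\<^sup>2 - (dist p q)\<^sup>2) / (2 * dist x p * dist x q)"

lemma comparison_angle_eq_arccos: "comparison_angle x p q = arccos (comparison_cos x p q)"
  unfolding comparison_angle_def comparison_cos_def ..

lemma comparison_cos_commute: "comparison_cos x p q = comparison_cos x q p"
  unfolding comparison_cos_def by (simp add: dist_commute algebra_simps)

lemma abs_cos_numerator_le:
  fixes x p q :: "'a::metric_space"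
  shows "\<bar>(dist x p)\<^sup>2 + (dist x q)\<^sup>2 - (dist p q)\<^sup>2\<bar> \<le> 2 * dist x p * dist x q"
proof -
  have "\<bar>dist x p - dist x q\<bar> \<le> \<bar>dist p q\<bar>" "\<bar>dist p q\<bar> \<le> \<bar>dist x p + dist x q\<bar>"
    using dist_triangle[of p q x] dist_triangle[of x p q] dist_triangle[of x q p]
    by (auto simp: dist_commute)
  then have "(dist x p - dist x q)\<^sup>2 \<le> (dist p q)\<^sup>2" "(dist p q)\<^sup>2 \<le> (dist x p + dist x q)\<^sup>2"
    by (simp_all only: abs_le_square_iff)
  then show ?thesis
    by (simp add: abs_le_iff power2_eq_square algebra_simps)
qed

lemma abs_comparison_cos_le_1: "\<bar>comparison_cos x p q\<bar> \<le> 1"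
proof (cases "x = p \<or> x = q")
  case False
  then have "0 < 2 * dist x p * dist x q"
    by simp
  then show ?thesis
    using abs_cos_numerator_le[of x p q] by (simp add: comparison_cos_def abs_divide divide_le_eq)
qed (auto simp: comparison_cos_def)

lemma euclidean_comparison_triangle:
  fixes A b c :: real
  assumes "0 < A" "0 \<le> b" "0 \<le> c" "\<bar>A\<^sup>2 + b\<^sup>2 - c\<^sup>2\<bar> \<le> 2 * A * b"
  obtains Z :: complex where "dist Z 0 = b" "dist (complex_of_real A) Z = c"
    and "\<And>s. (dist (complex_of_real s) Z)\<^sup>2 = s\<^sup>2 + b\<^sup>2 - s * (A\<^sup>2 + b\<^sup>2 - c\<^sup>2) / A"
proof
  define u where "u = (A\<^sup>2 + b\<^sup>2 - c\<^sup>2) / (2 * A)"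
  have "\<bar>u\<bar> \<le> \<bar>b\<bar>"
    using assms unfolding u_def by (simp add: abs_divide divide_le_eq mult_ac)
  then have "0 \<le> b\<^sup>2 - u\<^sup>2"
    by (simp add: abs_le_square_iff)
  define Z where "Z = Complex u (sqrt (b\<^sup>2 - u\<^sup>2))"
  have dist_Z: "(dist (complex_of_real s) Z)\<^sup>2 = s\<^sup>2 + b\<^sup>2 - 2 * s * u" for s
  proof -
    have "(dist (complex_of_real s) Z)\<^sup>2 = (s - u)\<^sup>2 + (sqrt (b\<^sup>2 - u\<^sup>2))\<^sup>2"
      by (simp add: Z_def dist_complex_def cmod_power2)
    then show ?thesis
      using \<open>0 \<le> b\<^sup>2 - u\<^sup>2\<close> by (simp add: power2_eq_square algebra_simps)
  qed
  show "(dist (complex_of_real s) Z)\<^sup>2 = s\<^sup>2 + b\<^sup>2 - s * (A\<^sup>2 + b\<^sup>2 - c\<^sup>2) / A" for s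
    using assms(1) by (simp add: dist_Z u_def field_simps)
  show "dist Z 0 = b"
    using dist_Z[of 0] assms(2) by (simp add: dist_commute power2_eq_iff_nonneg)
  have "(dist (complex_of_real A) Z)\<^sup>2 = c\<^sup>2"
    using assms(1) by (simp add: dist_Z u_def)
  then show "dist (complex_of_real A) Z = c"
    using assms(3) by (simp add: power2_eq_iff_nonneg)
qed

text \<open>The CAT(0) inequality for the distance from z to the point of [x y] at distance s from x,
  with denominators cleared.\<close>

lemma CAT0_dist_segment_point:
  assumes cat: "CAT0 TYPE('a::metric_space)"
    and g: "geodesic_segment g x y" and xy: "0 < dist x y" and s: "0 \<le> s" "s \<le> dist x y"
  shows "dist x y * (dist (g s) (z::'a))\<^sup>2
           \<le> dist x y * (s\<^sup>2 + (dist x z)\<^sup>2) - s * ((dist x y)\<^sup>2 + (dist x z)\<^sup>2 - (dist y z)\<^sup>2)"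
proof -
  have "geodesic_space TYPE('a)"
    using cat unfolding CAT0_def by blast
  then obtain g2 g3 where g2: "geodesic_segment g2 y z" and g3: "geodesic_segment g3 z x"
    unfolding geodesic_space_def by blast
  let ?A = "dist x y"
  obtain Z where dZX: "dist Z 0 = dist z x" and dYZ: "dist (complex_of_real ?A) Z = dist y z"
    and dist_Z: "\<And>t. (dist (complex_of_real t) Z)\<^sup>2
                        = t\<^sup>2 + (dist x z)\<^sup>2 - t * (?A\<^sup>2 + (dist x z)\<^sup>2 - (dist y z)\<^sup>2) / ?A"
    using euclidean_comparison_triangle[OF xy zero_le_dist zero_le_dist abs_cos_numerator_le]
    by (metis dist_commute)
  have dXY: "dist 0 (complex_of_real ?A) = ?A"
    by simp
  have "let sides = {(g, cmp_side 0 (complex_of_real ?A), dist x y),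
                     (g2, cmp_side (complex_of_real ?A) Z, dist y z), (g3, cmp_side Z 0, dist z x)}
        in \<forall>(c, C, l)\<in>sides. \<forall>(c', C', l')\<in>sides. \<forall>s\<in>{0..l}. \<forall>t\<in>{0..l'}.
             dist (c s) (c' t) \<le> dist (C s) (C' t)"
    using cat g g2 g3 dXY dYZ dZX unfolding CAT0_def by blast
  then have "dist (g s) (g3 0) \<le> dist (cmp_side 0 (complex_of_real ?A) s) (cmp_side Z 0 0)"
    using s unfolding Let_def by auto
  moreover have "g3 0 = z"
    using g3 unfolding geodesic_segment_def by simp
  moreover have "cmp_side 0 (complex_of_real ?A) s = complex_of_real s"
    using xy by (simp add: cmp_side_def)
  ultimately have "dist (g s) z \<le> dist (complex_of_real s) Z"
    by (simp add: cmp_side_def)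
  then have "(dist (g s) z)\<^sup>2 \<le> (dist (complex_of_real s) Z)\<^sup>2"
    by (simp add: power_mono)
  then show ?thesis
    using xy by (simp add: dist_Z field_simps)
qed

section \<open>Geodesics issuing from a point\<close>

definition unit_geodesic :: "'a::metric_space \<Rightarrow> (real \<Rightarrow> 'a) \<Rightarrow> real \<Rightarrow> bool" where
  "unit_geodesic x c e \<longleftrightarrow> c 0 = x \<and> (\<forall>s\<in>{0..e}. \<forall>t\<in>{0..e}. dist (c s) (c t) = \<bar>s - t\<bar>)"

lemma unit_geodesic_dist:
  "unit_geodesic x c e \<Longrightarrow> 0 \<le> s \<Longrightarrow> s \<le> e \<Longrightarrow> 0 \<le> t \<Longrightarrow> t \<le> e \<Longrightarrow> dist (c s) (c t) = \<bar>s - t\<bar>"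
  unfolding unit_geodesic_def by auto

lemma unit_geodesic_dist_start: "unit_geodesic x c e \<Longrightarrow> 0 \<le> s \<Longrightarrow> s \<le> e \<Longrightarrow> dist x (c s) = s"
  using unit_geodesic_dist[of x c e 0 s] unfolding unit_geodesic_def by auto

lemma unit_geodesic_shrink: "unit_geodesic x c e \<Longrightarrow> e' \<le> e \<Longrightarrow> unit_geodesic x c e'"
  unfolding unit_geodesic_def by auto

lemma unit_geodesic_imp_geodesic_segment:
  "unit_geodesic x c e \<Longrightarrow> 0 \<le> s \<Longrightarrow> s \<le> e \<Longrightarrow> geodesic_segment c x (c s)"
  using unit_geodesic_dist_start[of x c e s] unfolding geodesic_segment_def unit_geodesic_def by auto

lemma geodesic_segment_imp_unit_geodesic: "geodesic_segment g y p \<Longrightarrow> unit_geodesic y g (dist y p)"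
  unfolding unit_geodesic_def geodesic_segment_def by auto

lemma geodesic_from_iff_unit_geodesic: "geodesic_from x c \<longleftrightarrow> (\<exists>e>0. unit_geodesic x c e)"
  unfolding geodesic_from_def unit_geodesic_def by blast

lemma complete_geodesic_forward: "complete_geodesic a \<Longrightarrow> unit_geodesic (a s) (\<lambda>t. a (s + t)) e"
  unfolding unit_geodesic_def complete_geodesic_def by auto

lemma complete_geodesic_backward: "complete_geodesic a \<Longrightarrow> unit_geodesic (a s) (\<lambda>t. a (s - t)) e"
  unfolding unit_geodesic_def complete_geodesic_def by (auto simp: abs_minus_commute)

lemma dist_sq_eq_comparison_cos:
  assumes "0 < dist x p" "0 < dist x q"
  shows "(dist p q)\<^sup>2 = (dist x p)\<^sup>2 + (dist x q)\<^sup>2 - 2 * dist x p * dist x q * comparison_cos x p q"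
  using assms unfolding comparison_cos_def by (simp add: field_simps)

lemma unit_geodesics_law_of_cosines:
  assumes "unit_geodesic x c e" "unit_geodesic x c' e'" "0 < s" "s \<le> e" "0 < t" "t \<le> e'"
  shows "(dist (c s) (c' t))\<^sup>2 = s\<^sup>2 + t\<^sup>2 - 2 * s * t * comparison_cos x (c s) (c' t)"
  using dist_sq_eq_comparison_cos[of x "c s" "c' t"] assms
    unit_geodesic_dist_start[OF assms(1), of s] unit_geodesic_dist_start[OF assms(2), of t]
  by simp

lemma unit_geodesics_dist_same_time:
  assumes "unit_geodesic x c e" "unit_geodesic x c' e" "0 < t" "t \<le> e" "0 \<le> \<mu>"
  shows "dist (c t) (c' t) \<le> \<mu> * t \<longleftrightarrow> 1 - \<mu>\<^sup>2 / 2 \<le> comparison_cos x (c t) (c' t)"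
    and "\<mu> * t \<le> dist (c t) (c' t) \<longleftrightarrow> comparison_cos x (c t) (c' t) \<le> 1 - \<mu>\<^sup>2 / 2"
proof -
  let ?d = "dist (c t) (c' t)" and ?K = "comparison_cos x (c t) (c' t)"
  have sq: "?d\<^sup>2 = t\<^sup>2 * (2 - 2 * ?K)"
    using unit_geodesics_law_of_cosines[OF assms(1,2,3,4,3,4)] by (simp add: algebra_simps power2_eq_square)
  have "?d \<le> \<mu> * t \<longleftrightarrow> ?d\<^sup>2 \<le> (\<mu> * t)\<^sup>2"
    using power2_le_iff_abs_le[of "\<mu> * t" ?d] assms(3,5) by simp
  also have "\<dots> \<longleftrightarrow> t\<^sup>2 * (2 - 2 * ?K) \<le> t\<^sup>2 * \<mu>\<^sup>2"
    by (simp add: sq power_mult_distrib mult.commute)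
  also have "\<dots> \<longleftrightarrow> 2 - 2 * ?K \<le> \<mu>\<^sup>2"
    using assms(3) by simp
  also have "\<dots> \<longleftrightarrow> 1 - \<mu>\<^sup>2 / 2 \<le> ?K"
    by linarith
  finally show "?d \<le> \<mu> * t \<longleftrightarrow> 1 - \<mu>\<^sup>2 / 2 \<le> ?K" .
  have "\<mu> * t \<le> ?d \<longleftrightarrow> (\<mu> * t)\<^sup>2 \<le> ?d\<^sup>2"
    using power2_le_iff_abs_le[of ?d "\<mu> * t"] assms(3,5) by simp
  also have "\<dots> \<longleftrightarrow> t\<^sup>2 * \<mu>\<^sup>2 \<le> t\<^sup>2 * (2 - 2 * ?K)"
    by (simp add: sq power_mult_distrib mult.commute)
  also have "\<dots> \<longleftrightarrow> \<mu>\<^sup>2 \<le> 2 - 2 * ?K"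
    using assms(3) by simp
  also have "\<dots> \<longleftrightarrow> ?K \<le> 1 - \<mu>\<^sup>2 / 2"
    by linarith
  finally show "\<mu> * t \<le> ?d \<longleftrightarrow> ?K \<le> 1 - \<mu>\<^sup>2 / 2" .
qed

lemma CAT0_comparison_cos_antimono_left:
  assumes cat: "CAT0 TYPE('a::metric_space)" and c: "unit_geodesic x c e"
    and s: "0 < s'" "s' \<le> s" "s \<le> e" and z: "0 < dist x (z::'a)"
  shows "comparison_cos x (c s) z \<le> comparison_cos x (c s') z"
proof -
  have ds: "dist x (c s) = s" and ds': "dist x (c s') = s'"
    using unit_geodesic_dist_start[OF c] s by simp_all
  have "s * (dist (c s') z)\<^sup>2
          \<le> s * (s'\<^sup>2 + (dist x z)\<^sup>2) - s' * (s\<^sup>2 + (dist x z)\<^sup>2 - (dist (c s) z)\<^sup>2)"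
    using CAT0_dist_segment_point[OF cat unit_geodesic_imp_geodesic_segment[OF c, of s], of s' z] s ds
    by simp
  then have le: "s' * (s\<^sup>2 + (dist x z)\<^sup>2 - (dist (c s) z)\<^sup>2)
                  \<le> s * (s'\<^sup>2 + (dist x z)\<^sup>2 - (dist (c s') z)\<^sup>2)"
    by (simp add: algebra_simps)
  have "comparison_cos x (c s) z = s' * (s\<^sup>2 + (dist x z)\<^sup>2 - (dist (c s) z)\<^sup>2) / (2 * s * s' * dist x z)"
    unfolding comparison_cos_def ds using s z by (simp add: field_simps)
  also have "\<dots> \<le> s * (s'\<^sup>2 + (dist x z)\<^sup>2 - (dist (c s') z)\<^sup>2) / (2 * s * s' * dist x z)"
    using le s z by (intro divide_right_mono) auto
  also have "\<dots> = comparison_cos x (c s') z"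
    unfolding comparison_cos_def ds' using s z by (simp add: field_simps)
  finally show ?thesis .
qed

lemma CAT0_comparison_cos_antimono:
  assumes cat: "CAT0 TYPE('a::metric_space)" and c: "unit_geodesic (x::'a) c e"
    and c': "unit_geodesic x c' e'"
    and s: "0 < s'" "s' \<le> s" "s \<le> e" and t: "0 < t'" "t' \<le> t" "t \<le> e'"
  shows "comparison_cos x (c s) (c' t) \<le> comparison_cos x (c s') (c' t')"
proof -
  have "0 < dist x (c' t)" "0 < dist x (c s')"
    using unit_geodesic_dist_start[OF c', of t] unit_geodesic_dist_start[OF c, of s'] s t by simp_all
  then have "comparison_cos x (c s) (c' t) \<le> comparison_cos x (c s') (c' t)"
    using CAT0_comparison_cos_antimono_left[OF cat c s] by blast
  also have "\<dots> = comparison_cos x (c' t) (c s')"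
    by (rule comparison_cos_commute)
  also have "\<dots> \<le> comparison_cos x (c' t') (c s')"
    using CAT0_comparison_cos_antimono_left[OF cat c' t] \<open>0 < dist x (c s')\<close> by blast
  also have "\<dots> = comparison_cos x (c s') (c' t')"
    by (rule comparison_cos_commute)
  finally show ?thesis .
qed

lemma CAT0_dist_ratio_mono:
  assumes cat: "CAT0 TYPE('a::metric_space)" and c: "unit_geodesic (x::'a) c e"
    and c': "unit_geodesic x c' e" and t: "0 < t" "t \<le> t'" "t' \<le> e" and "0 \<le> \<mu>"
    and less: "dist (c t') (c' t') < \<mu> * t'"
  shows "dist (c t) (c' t) < \<mu> * t"
proof -
  have "comparison_cos x (c t') (c' t') \<le> comparison_cos x (c t) (c' t)"
    using CAT0_comparison_cos_antimono[OF cat c c'] t by simp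
  moreover have "1 - \<mu>\<^sup>2 / 2 < comparison_cos x (c t') (c' t')"
    using less unit_geodesics_dist_same_time(2)[OF c c', of t' \<mu>] t \<open>0 \<le> \<mu>\<close> by auto
  ultimately show ?thesis
    using unit_geodesics_dist_same_time(2)[OF c c' t(1) _ \<open>0 \<le> \<mu>\<close>] t by auto
qed

lemma Sup_comparison_angles_nonneg:
  fixes c c' :: "real \<Rightarrow> 'a::metric_space"
  assumes "0 < e"
  shows "0 \<le> Sup ((\<lambda>(s, t). comparison_angle x (c s) (c' t)) ` ({0<..e} \<times> {0<..e}))"
proof (rule cSup_upper2)
  show "comparison_angle x (c e) (c' e) \<in> (\<lambda>(s, t). comparison_angle x (c s) (c' t)) ` ({0<..e} \<times> {0<..e})"
    by (rule image_eqI[where x = "(e, e)"]) (use assms in auto)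
  show "bdd_above ((\<lambda>(s, t). comparison_angle x (c s) (c' t)) ` ({0<..e} \<times> {0<..e}))"
    using arccos_ubound abs_comparison_cos_le_1
    by (auto simp: comparison_angle_eq_arccos abs_le_iff intro!: bdd_aboveI[of _ pi])
qed (use arccos_lbound abs_comparison_cos_le_1 in \<open>auto simp: comparison_angle_eq_arccos abs_le_iff\<close>)

lemma alex_angle_nonneg: "0 \<le> alex_angle x c c'"
  unfolding alex_angle_def using Sup_comparison_angles_nonneg by (auto intro!: cINF_greatest)

lemma CAT0_alex_angle_le_comparison_angle:
  assumes cat: "CAT0 TYPE('a::metric_space)" and c: "unit_geodesic (x::'a) c e"
    and c': "unit_geodesic x c' e'" and s: "0 < s" "s \<le> e" and t: "0 < t" "t \<le> e'"
  shows "alex_angle x c c' \<le> comparison_angle x (c s) (c' t)"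
proof -
  let ?S = "\<lambda>e. (\<lambda>(s, t). comparison_angle x (c s) (c' t)) ` ({0<..e} \<times> {0<..e})"
  define e0 where "e0 = min s t"
  have e0: "0 < e0"
    using s t e0_def by simp
  have "alex_angle x c c' \<le> Sup (?S e0)"
    unfolding alex_angle_def using e0 Sup_comparison_angles_nonneg
    by (intro cINF_lower bdd_belowI2[of _ 0]) auto
  also have "\<dots> \<le> comparison_angle x (c s) (c' t)"
  proof (rule cSup_least)
    show "?S e0 \<noteq> {}"
      using e0 by auto
  next
    fix \<phi> assume "\<phi> \<in> ?S e0"
    then obtain s' t' where st: "0 < s'" "s' \<le> e0" "0 < t'" "t' \<le> e0"
      and \<phi>: "\<phi> = comparison_angle x (c s') (c' t')"
      by auto
    have "comparison_cos x (c s) (c' t) \<le> comparison_cos x (c s') (c' t')"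
      using CAT0_comparison_cos_antimono[OF cat c c', of s' s t' t] st s t e0_def by simp
    then show "\<phi> \<le> comparison_angle x (c s) (c' t)"
      unfolding \<phi> comparison_angle_eq_arccos
      using arccos_le_mono abs_comparison_cos_le_1 by blast
  qed
  finally show ?thesis .
qed

lemma CAT0_dist_sq_ge_of_alex_angle_gt:
  assumes cat: "CAT0 TYPE('a::metric_space)" and b: "unit_geodesic (x::'a) b e'"
    and c: "unit_geodesic x c e" and \<theta>: "0 \<le> \<theta>" "\<theta> \<le> 1"
    and angle: "arccos (- \<theta>) < alex_angle x b c"
    and t: "0 < t" "t \<le> e" and u: "0 < u" "u \<le> e'"
  shows "t\<^sup>2 + u\<^sup>2 + 2 * t * u * \<theta> \<le> (dist (c t) (b u))\<^sup>2"
proof -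
  let ?K = "comparison_cos x (b u) (c t)"
  have "arccos (- \<theta>) < arccos ?K"
    using angle CAT0_alex_angle_le_comparison_angle[OF cat b c u t]
    unfolding comparison_angle_eq_arccos by linarith
  then have "?K < - \<theta>"
    using arccos_less_mono[of "- \<theta>" ?K] abs_comparison_cos_le_1[of x "b u" "c t"] \<theta> by simp
  then have "2 * t * u * \<theta> \<le> 2 * t * u * (- ?K)"
    using u t by (intro mult_left_mono) auto
  moreover have "(dist (c t) (b u))\<^sup>2 = t\<^sup>2 + u\<^sup>2 + 2 * t * u * (- ?K)"
    using unit_geodesics_law_of_cosines[OF b c u t] by (simp add: dist_commute algebra_simps)
  ultimately show ?thesis
    by linarith
qed

lemma several_inverses_diverging_pair:
  assumes "several_inverses x \<xi>"
  obtains \<delta> where "0 < \<delta>" "\<delta> \<le> pi"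
    and "\<And>\<alpha>. \<alpha> < pi \<Longrightarrow> \<exists>c c'. geodesic_from x c \<and> geodesic_from x c' \<and>
           \<alpha> < alex_angle x \<xi> c \<and> \<alpha> < alex_angle x \<xi> c' \<and> \<delta> \<le> alex_angle x c c'"
proof -
  obtain \<eta> \<eta>' where \<eta>: "angle_cauchy x \<eta>" "angle_cauchy x \<eta>'"
    and lim: "(\<lambda>n. alex_angle x \<xi> (\<eta> n)) \<longlonglongrightarrow> pi" "(\<lambda>n. alex_angle x \<xi> (\<eta>' n)) \<longlonglongrightarrow> pi"
    and not_lim: "\<not> (\<lambda>n. alex_angle x (\<eta> n) (\<eta>' n)) \<longlonglongrightarrow> 0"
    using assms unfolding several_inverses_def by blast
  obtain \<delta> where \<delta>: "0 < \<delta>" and often: "\<And>N. \<exists>n\<ge>N. \<delta> \<le> alex_angle x (\<eta> n) (\<eta>' n)"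
    using not_lim unfolding LIMSEQ_iff by (auto simp: not_less alex_angle_nonneg)
  show ?thesis
  proof (rule that[of "min \<delta> pi"])
    fix \<alpha> assume "\<alpha> < pi"
    then have "eventually (\<lambda>n. \<alpha> < alex_angle x \<xi> (\<eta> n) \<and> \<alpha> < alex_angle x \<xi> (\<eta>' n)) sequentially"
      using lim by (intro eventually_conj order_tendstoD(1)) auto
    then obtain N where "\<forall>n\<ge>N. \<alpha> < alex_angle x \<xi> (\<eta> n) \<and> \<alpha> < alex_angle x \<xi> (\<eta>' n)"
      unfolding eventually_sequentially by blast
    moreover obtain n where "n \<ge> N" "\<delta> \<le> alex_angle x (\<eta> n) (\<eta>' n)"
      using often by blast
    moreover have "geodesic_from x (\<eta> n)" "geodesic_from x (\<eta>' n)"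
      using \<eta> unfolding angle_cauchy_def by simp_all
    ultimately show "\<exists>c c'. geodesic_from x c \<and> geodesic_from x c' \<and>
           \<alpha> < alex_angle x \<xi> c \<and> \<alpha> < alex_angle x \<xi> c' \<and> min \<delta> pi \<le> alex_angle x c c'"
      by force
  qed (use \<delta> in auto)
qed

lemma CAT0_dist_same_time_ge_of_alex_angle_ge:
  assumes cat: "CAT0 TYPE('a::metric_space)" and c: "unit_geodesic (x::'a) c e"
    and c': "unit_geodesic x c' e" and \<delta>: "0 \<le> \<delta>" "\<delta> \<le> pi" "\<delta> \<le> alex_angle x c c'"
    and t: "0 < t" "t \<le> e"
  shows "sqrt (2 * (1 - cos \<delta>)) * t \<le> dist (c t) (c' t)"
proof -
  let ?K = "comparison_cos x (c t) (c' t)"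
  have "\<delta> \<le> arccos ?K"
    using \<delta>(3) CAT0_alex_angle_le_comparison_angle[OF cat c c' t t]
    unfolding comparison_angle_eq_arccos by linarith
  then have "cos (arccos ?K) \<le> cos \<delta>"
    using \<delta> arccos_ubound abs_comparison_cos_le_1 by (intro cos_monotone_0_pi_le) (auto simp: abs_le_iff)
  then have "?K \<le> 1 - (sqrt (2 * (1 - cos \<delta>)))\<^sup>2 / 2"
    using abs_comparison_cos_le_1[of x "c t" "c' t"] cos_le_one[of \<delta>] by (simp add: abs_le_iff field_simps)
  then show ?thesis
    using unit_geodesics_dist_same_time(2)[OF c c' t] by simp
qed

text \<open>The ratio dist (c t) (b t) / t is monotone in t, so if both c and c' came closer than
  \<kappa> t to b at some times, they would do so simultaneously.\<close>

lemma CAT0_one_of_diverging_pair_leaves: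
  assumes cat: "CAT0 TYPE('a::metric_space)" and c: "unit_geodesic (x::'a) c e"
    and c': "unit_geodesic x c' e" and b: "unit_geodesic x b e" and "0 < \<kappa>"
    and diverge: "\<And>t. 0 < t \<Longrightarrow> t \<le> e \<Longrightarrow> 2 * \<kappa> * t \<le> dist (c t) (c' t)"
  shows "\<exists>c''\<in>{c, c'}. \<forall>t\<in>{0<..e}. \<kappa> * t \<le> dist (c'' t) (b t)"
proof (rule ccontr)
  assume "\<not> ?thesis"
  then obtain t1 t2 where t1: "0 < t1" "t1 \<le> e" "dist (c t1) (b t1) < \<kappa> * t1"
    and t2: "0 < t2" "t2 \<le> e" "dist (c' t2) (b t2) < \<kappa> * t2"
    by (auto simp: not_le)
  define t where "t = min t1 t2"
  have t: "0 < t" "t \<le> t1" "t \<le> t2" "t \<le> e"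
    using t1 t2 unfolding t_def by auto
  have "dist (c t) (b t) < \<kappa> * t" "dist (c' t) (b t) < \<kappa> * t"
    using CAT0_dist_ratio_mono[OF cat c b t(1,2)] CAT0_dist_ratio_mono[OF cat c' b t(1,3)]
      t1 t2 \<open>0 < \<kappa>\<close> by auto
  then have "dist (c t) (c' t) < 2 * \<kappa> * t"
    using dist_triangle[of "c t" "c' t" "b t"] by (simp add: dist_commute)
  then show False
    using diverge[OF t(1,4)] by simp
qed

text \<open>Seen from y: if p lies almost in the direction of b and c leaves b linearly, then p is
  not almost in the direction of c.\<close>

lemma CAT0_comparison_cos_le_of_leaving:
  assumes cat: "CAT0 TYPE('a::metric_space)" and b: "unit_geodesic (y::'a) b d"
    and c: "unit_geodesic y c r" and "0 < d" "0 < r" "0 < dist y p" "0 \<le> \<kappa>"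
    and leaves: "\<And>t. 0 < t \<Longrightarrow> t \<le> r \<Longrightarrow> \<kappa> * t \<le> dist (c t) (b t)"
    and close: "1 - \<kappa>\<^sup>2 / 8 \<le> comparison_cos y (b d) p"
  shows "comparison_cos y (c r) p \<le> 1 - \<kappa>\<^sup>2 / 8"
proof -
  define L where "L = dist y p"
  define t0 where "t0 = min d (min r L)"
  have t0: "0 < t0" "t0 \<le> d" "t0 \<le> r" "t0 \<le> L"
    using assms unfolding t0_def L_def by auto
  obtain g where seg: "geodesic_segment g y p"
    using cat unfolding CAT0_def geodesic_space_def by blast
  have g: "unit_geodesic y g L"
    unfolding L_def by (rule geodesic_segment_imp_unit_geodesic[OF seg])
  have gL: "g L = p"
    using seg unfolding L_def geodesic_segment_def by simp
  have g0: "unit_geodesic y g t0" and b0: "unit_geodesic y b t0" and c0: "unit_geodesic y c t0"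
    using unit_geodesic_shrink g b c t0 by blast+
  have \<theta>: "1 - \<kappa>\<^sup>2 / 8 = 1 - (\<kappa> / 2)\<^sup>2 / 2"
    by (simp add: power_divide)
  have \<kappa>2: "0 \<le> \<kappa> / 2"
    using \<open>0 \<le> \<kappa>\<close> by simp
  have "comparison_cos y (b d) (g L) \<le> comparison_cos y (b t0) (g t0)"
    using CAT0_comparison_cos_antimono[OF cat b g, of t0 d t0 L] t0 by simp
  then have "1 - (\<kappa> / 2)\<^sup>2 / 2 \<le> comparison_cos y (b t0) (g t0)"
    using close gL \<theta> by simp
  then have "dist (b t0) (g t0) \<le> \<kappa> / 2 * t0"
    using unit_geodesics_dist_same_time(1)[OF b0 g0 t0(1) order_refl \<kappa>2] by blast
  moreover have "\<kappa> * t0 \<le> dist (c t0) (b t0)"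
    using leaves t0 by simp
  ultimately have "\<kappa> / 2 * t0 \<le> dist (c t0) (g t0)"
    using dist_triangle[of "c t0" "b t0" "g t0"] by (simp add: dist_commute)
  then have "comparison_cos y (c t0) (g t0) \<le> 1 - (\<kappa> / 2)\<^sup>2 / 2"
    using unit_geodesics_dist_same_time(2)[OF c0 g0 t0(1) order_refl \<kappa>2] by blast
  moreover have "comparison_cos y (c r) (g L) \<le> comparison_cos y (c t0) (g t0)"
    using CAT0_comparison_cos_antimono[OF cat c g, of t0 r t0 L] t0 by simp
  ultimately show ?thesis
    using gL \<theta> by simp
qed

section \<open>Branches of a geodesic line\<close>

text \<open>A branch c of the line a at a s leaves the backward ray linearly and stays at least as far
  from the forward ray as in a Euclidean angle of cosine \<kappa>^2 / 8 - 1. The threshold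
  1 - \<kappa>^2 / 8 is the comparison cosine at which two unit speed geodesics from a point are
  \<kappa> t / 2 apart at time t.\<close>

definition line_branch :: "(real \<Rightarrow> 'a::metric_space) \<Rightarrow> real \<Rightarrow> real \<Rightarrow> real \<Rightarrow> (real \<Rightarrow> 'a) \<Rightarrow> bool"
  where "line_branch a \<kappa> r s c \<longleftrightarrow> unit_geodesic (a s) c r \<and>
    (\<forall>t\<in>{0<..r}. \<kappa> * t \<le> dist (c t) (a (s - t))) \<and>
    (\<forall>t\<in>{0<..r}. \<forall>u>0. t\<^sup>2 + u\<^sup>2 + 2 * t * u * (1 - \<kappa>\<^sup>2 / 8) \<le> (dist (c t) (a (s + u)))\<^sup>2)"

lemma line_branch_shrink: "line_branch a \<kappa> r s c \<Longrightarrow> r' \<le> r \<Longrightarrow> line_branch a \<kappa> r' s c"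
  unfolding line_branch_def using unit_geodesic_shrink by fastforce

lemma line_branch_dist_end: "line_branch a \<kappa> r s c \<Longrightarrow> 0 \<le> r \<Longrightarrow> dist (a s) (c r) = r"
  unfolding line_branch_def by (auto intro: unit_geodesic_dist_start)

lemma line_branch_seen_from_ahead:
  assumes a: "complete_geodesic a" and \<kappa>: "0 < \<kappa>" "\<kappa> \<le> 1" and r: "0 < r"
    and c: "line_branch a \<kappa> r s c" and "s < s'"
  shows "r \<le> dist (a s') (c r)" and "1 - \<kappa>\<^sup>2 / 8 \<le> comparison_cos (a s') (a s) (c r)"
proof -
  define d where "d = s' - s"
  define L where "L = dist (a s') (c r)"
  define \<theta> where "\<theta> = 1 - \<kappa>\<^sup>2 / 8"
  have d: "0 < d" "dist (a s') (a s) = d"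
    using \<open>s < s'\<close> a[unfolded complete_geodesic_def, rule_format, of s' s] by (simp_all add: d_def)
  have \<theta>: "0 \<le> \<theta>" "\<theta> \<le> 1"
    using \<kappa> power_le_one[of \<kappa> 2] unfolding \<theta>_def by auto
  have "a (s + d) = a s'"
    unfolding d_def by simp
  moreover have "r\<^sup>2 + d\<^sup>2 + 2 * r * d * \<theta> \<le> (dist (c r) (a (s + d)))\<^sup>2"
    using c r d(1) unfolding line_branch_def \<theta>_def by auto
  ultimately have L2: "r\<^sup>2 + d\<^sup>2 + 2 * r * d * \<theta> \<le> L\<^sup>2"
    unfolding L_def by (simp add: dist_commute)
  have dist_sp: "dist (a s) (c r) = r"
    using line_branch_dist_end[OF c] r by simp
  then have L_le: "L \<le> d + r"
    using dist_triangle[of "a s'" "c r" "a s"] d unfolding L_def by simp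
  have "0 \<le> 2 * r * d * \<theta>"
    using \<theta> r d by simp
  then have "r\<^sup>2 \<le> L\<^sup>2"
    using L2 zero_le_power2[of d] by linarith
  then show r_le: "r \<le> dist (a s') (c r)"
    using r unfolding L_def by (simp add: power2_le_iff_abs_le)
  have "2 * d * L * \<theta> \<le> 2 * d * (d + r) * \<theta>"
    using L_le d \<theta> by (simp add: mult_right_mono)
  also have "\<dots> \<le> 2 * d * d + 2 * r * d * \<theta>"
    using d \<theta> by (simp add: algebra_simps mult_left_le)
  also have "\<dots> \<le> d\<^sup>2 + L\<^sup>2 - r\<^sup>2"
    using L2 by (simp add: power2_eq_square)
  finally have "2 * d * L * \<theta> \<le> d\<^sup>2 + L\<^sup>2 - r\<^sup>2" .
  then show "1 - \<kappa>\<^sup>2 / 8 \<le> comparison_cos (a s') (a s) (c r)"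
    using d r r_le unfolding comparison_cos_def L_def[symmetric] \<theta>_def[symmetric] dist_sp
    by (simp add: le_divide_eq mult.commute mult.left_commute)
qed

lemma CAT0_line_branches_separated:
  assumes cat: "CAT0 TYPE('a::metric_space)" and a: "complete_geodesic (a :: real \<Rightarrow> 'a)"
    and \<kappa>: "0 < \<kappa>" "\<kappa> \<le> 1" and r: "0 < r"
    and c: "line_branch a \<kappa> r s c" and c': "line_branch a \<kappa> r s' c'" and "s < s'"
  shows "\<kappa> * r / 2 \<le> dist (c r) (c' r)"
proof -
  define L where "L = dist (a s') (c r)"
  have L: "r \<le> L" and close: "1 - \<kappa>\<^sup>2 / 8 \<le> comparison_cos (a s') (a (s' - (s' - s))) (c r)"
    using line_branch_seen_from_ahead[OF a \<kappa> r c \<open>s < s'\<close>] unfolding L_def by auto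
  have c'_geo: "unit_geodesic (a s') c' r"
    using c' unfolding line_branch_def by simp
  have pos: "0 < s' - s" "0 < dist (a s') (c r)" "0 \<le> \<kappa>"
    using \<open>s < s'\<close> L r \<kappa> unfolding L_def by linarith+
  moreover have "\<And>t. 0 < t \<Longrightarrow> t \<le> r \<Longrightarrow> \<kappa> * t \<le> dist (c' t) (a (s' - t))"
    using c' unfolding line_branch_def by simp
  ultimately have "comparison_cos (a s') (c' r) (c r) \<le> 1 - \<kappa>\<^sup>2 / 8"
    using CAT0_comparison_cos_le_of_leaving[OF cat complete_geodesic_backward[OF a] c'_geo _ r _ _ _ close]
    by blast
  moreover have "(dist (c' r) (c r))\<^sup>2 = r\<^sup>2 + L\<^sup>2 - 2 * r * L * comparison_cos (a s') (c' r) (c r)"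
    using dist_sq_eq_comparison_cos[of "a s'" "c' r" "c r"] unit_geodesic_dist_start[OF c'_geo, of r] pos(2) r
    unfolding L_def by simp
  ultimately have "r\<^sup>2 + L\<^sup>2 - 2 * r * L * (1 - \<kappa>\<^sup>2 / 8) \<le> (dist (c r) (c' r))\<^sup>2"
    using L r by (simp add: dist_commute mult_left_mono)
  moreover have "(\<kappa> * r / 2)\<^sup>2 \<le> r\<^sup>2 + L\<^sup>2 - 2 * r * L * (1 - \<kappa>\<^sup>2 / 8)"
  proof -
    have "r * r * \<kappa>\<^sup>2 \<le> r * L * \<kappa>\<^sup>2"
      using L r by (intro mult_right_mono mult_left_mono) auto
    moreover have "r\<^sup>2 + L\<^sup>2 - 2 * r * L * (1 - \<kappa>\<^sup>2 / 8) = (L - r)\<^sup>2 + r * L * \<kappa>\<^sup>2 / 4"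
      by (simp add: power2_eq_square field_simps)
    moreover have "(\<kappa> * r / 2)\<^sup>2 = r * r * \<kappa>\<^sup>2 / 4"
      by (simp add: power_mult_distrib power_divide power2_eq_square)
    ultimately show ?thesis
      using zero_le_power2[of "L - r"] by linarith
  qed
  ultimately have "(\<kappa> * r / 2)\<^sup>2 \<le> (dist (c r) (c' r))\<^sup>2"
    by linarith
  then show ?thesis
    using power2_le_iff_abs_le[of "dist (c r) (c' r)" "\<kappa> * r / 2"] \<kappa> r by simp
qed

lemma locally_compact_space_compact_ball:
  fixes x :: "'a::metric_space"
  assumes "locally_compact_space (euclidean :: 'a topology)"
  obtains \<rho> K where "0 < \<rho>" "compact K" "ball x \<rho> \<subseteq> K"
proof -
  obtain V K where "open V" "compact K" "x \<in> V" "V \<subseteq> K"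
    using assms unfolding locally_compact_space_def by (auto simp: open_openin[symmetric]) blast
  moreover obtain \<rho> where "0 < \<rho>" "ball x \<rho> \<subseteq> V"
    using \<open>open V\<close> \<open>x \<in> V\<close> open_contains_ball by blast
  ultimately show ?thesis
    using that[of \<rho> K] by blast
qed

lemma finite_if_separated_map_into_compact:
  fixes F :: "'b \<Rightarrow> 'a::metric_space"
  assumes "compact K" "F ` T \<subseteq> K" "0 < \<epsilon>"
    and sep: "\<And>s s'. s \<in> T \<Longrightarrow> s' \<in> T \<Longrightarrow> s \<noteq> s' \<Longrightarrow> \<epsilon> \<le> dist (F s) (F s')"
  shows "finite T"
proof -
  have "\<not> p islimpt F ` T" for p
  proof (rule discrete_imp_not_islimpt[OF \<open>0 < \<epsilon>\<close>])
    fix q q' assume "q \<in> F ` T" "q' \<in> F ` T" "dist q' q < \<epsilon>"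
    then show "q' = q"
      using sep by (auto simp: not_le[symmetric])
  qed
  then have "finite (F ` T)"
    using finite_not_islimpt_in_compact[OF \<open>compact K\<close>, of "F ` T"] assms(2) by (simp add: Int_absorb1)
  moreover have "inj_on F T"
    using sep \<open>0 < \<epsilon>\<close> by (intro inj_onI) (metis dist_self not_le)
  ultimately show ?thesis
    by (simp add: finite_image_iff)
qed

lemma CAT0_line_branch_points_not_islimpt:
  assumes cat: "CAT0 TYPE('a::metric_space)" and a: "complete_geodesic (a :: real \<Rightarrow> 'a)"
    and lc: "locally_compact_space (euclidean :: 'a topology)"
    and \<kappa>: "0 < \<kappa>" "\<kappa> \<le> 1" and r: "0 < r"
  shows "\<not> s0 islimpt {s. \<exists>c. line_branch a \<kappa> r s c}"
proof
  let ?U = "{s. \<exists>c. line_branch a \<kappa> r s c}"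
  assume "s0 islimpt ?U"
  obtain \<rho> K where \<rho>: "0 < \<rho>" and K: "compact K" "ball (a s0) \<rho> \<subseteq> K"
    using locally_compact_space_compact_ball[OF lc] by blast
  define r' where "r' = min r (\<rho> / 2)"
  have r': "0 < r'" "r' \<le> r" "r' \<le> \<rho> / 2"
    using r \<rho> unfolding r'_def by auto
  define T where "T = ?U \<inter> ball s0 (\<rho> / 2)"
  have "infinite T"
    using \<open>s0 islimpt ?U\<close> \<rho> unfolding T_def by (simp add: islimpt_eq_infinite_ball)
  have "\<forall>s\<in>T. \<exists>c. line_branch a \<kappa> r' s c"
    using line_branch_shrink[OF _ r'(2)] unfolding T_def by blast
  then obtain C where C: "\<And>s. s \<in> T \<Longrightarrow> line_branch a \<kappa> r' s (C s)"
    by metis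
  define F where "F s = C s r'" for s
  have sep: "\<kappa> * r' / 2 \<le> dist (F s) (F s')" if "s \<in> T" "s' \<in> T" "s \<noteq> s'" for s s'
    using that CAT0_line_branches_separated[OF cat a \<kappa> r'(1) C C]
    unfolding F_def by (metis dist_commute linorder_neqE_linordered_idom)
  have "F ` T \<subseteq> K"
  proof
    fix p assume "p \<in> F ` T"
    then obtain s where s: "s \<in> T" "p = F s"
      by blast
    have "dist (a s) p = r'"
      using line_branch_dist_end[OF C[OF s(1)]] r' unfolding s(2) F_def by simp
    moreover have "dist (a s0) (a s) < \<rho> / 2"
      using s(1) a unfolding T_def complete_geodesic_def by (simp add: dist_real_def)
    ultimately have "p \<in> ball (a s0) \<rho>"
      using dist_triangle[of "a s0" p "a s"] r' by simp
    then show "p \<in> K"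
      using K by blast
  qed
  moreover have "0 < \<kappa> * r' / 2"
    using \<kappa> r' by simp
  ultimately have "finite T"
    using finite_if_separated_map_into_compact[OF K(1), of F T "\<kappa> * r' / 2"] sep by blast
  then show False
    using \<open>infinite T\<close> by simp
qed

lemma CAT0_countable_line_branch_points:
  assumes "CAT0 TYPE('a::metric_space)" and "complete_geodesic (a :: real \<Rightarrow> 'a)"
    and "locally_compact_space (euclidean :: 'a topology)"
    and "0 < \<kappa>" "\<kappa> \<le> 1" and "0 < r"
  shows "countable {s. \<exists>c. line_branch a \<kappa> r s c}"
proof -
  let ?U = "{s. \<exists>c. line_branch a \<kappa> r s c}"
  have "?U sparse_in UNIV"
    using sparse_in_open[of UNIV ?U] CAT0_line_branch_points_not_islimpt[OF assms] by simp
  then show ?thesis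
    using sparse_imp_countable[of UNIV ?U] by simp
qed

lemma CAT0_line_branch_of_diverging_pair:
  assumes cat: "CAT0 TYPE('a::metric_space)" and a: "complete_geodesic (a :: real \<Rightarrow> 'a)"
    and \<kappa>: "0 < \<kappa>" "\<kappa> \<le> 1"
    and c1: "unit_geodesic (a s) c1 e" and c2: "unit_geodesic (a s) c2 e"
    and angles: "arccos (- (1 - \<kappa>\<^sup>2 / 8)) < alex_angle (a s) (\<lambda>t. a (s + t)) c1"
      "arccos (- (1 - \<kappa>\<^sup>2 / 8)) < alex_angle (a s) (\<lambda>t. a (s + t)) c2"
    and diverge: "\<And>t. 0 < t \<Longrightarrow> t \<le> e \<Longrightarrow> 2 * \<kappa> * t \<le> dist (c1 t) (c2 t)"
  shows "\<exists>c. line_branch a \<kappa> e s c"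
proof -
  obtain c where c: "c \<in> {c1, c2}" and leaves: "\<forall>t\<in>{0<..e}. \<kappa> * t \<le> dist (c t) (a (s - t))"
    using CAT0_one_of_diverging_pair_leaves[OF cat c1 c2 complete_geodesic_backward[OF a] \<kappa>(1) diverge]
    by blast
  have c_geo: "unit_geodesic (a s) c e"
    and c_angle: "arccos (- (1 - \<kappa>\<^sup>2 / 8)) < alex_angle (a s) (\<lambda>t. a (s + t)) c"
    using c c1 c2 angles by auto
  have "0 \<le> 1 - \<kappa>\<^sup>2 / 8"
    using \<kappa> power_le_one[of \<kappa> 2] by simp
  then have far: "t\<^sup>2 + u\<^sup>2 + 2 * t * u * (1 - \<kappa>\<^sup>2 / 8) \<le> (dist (c t) (a (s + u)))\<^sup>2"
    if "0 < t" "t \<le> e" "0 < u" for t u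
    using CAT0_dist_sq_ge_of_alex_angle_gt[OF cat complete_geodesic_forward[OF a, of s u] c_geo _ _
        c_angle that(1,2,3) order_refl] by simp
  have "line_branch a \<kappa> e s c"
    unfolding line_branch_def using c_geo leaves far by simp
  then show ?thesis
    by blast
qed

lemma CAT0_several_inverses_imp_line_branch:
  assumes cat: "CAT0 TYPE('a::metric_space)" and a: "complete_geodesic (a :: real \<Rightarrow> 'a)"
    and inv: "several_inverses (a s) (\<lambda>t. a (s + t))"
  shows "\<exists>k m c. line_branch a (1 / real (Suc k)) (1 / real (Suc m)) s c"
proof -
  obtain \<delta> where \<delta>: "0 < \<delta>" "\<delta> \<le> pi" and pair: "\<And>\<alpha>. \<alpha> < pi \<Longrightarrow> \<exists>c c'.
      geodesic_from (a s) c \<and> geodesic_from (a s) c' \<and> \<alpha> < alex_angle (a s) (\<lambda>t. a (s + t)) c \<and>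
      \<alpha> < alex_angle (a s) (\<lambda>t. a (s + t)) c' \<and> \<delta> \<le> alex_angle (a s) c c'"
    using several_inverses_diverging_pair[OF inv] by blast
  have "cos \<delta> < 1"
    using cos_monotone_0_pi[of 0 \<delta>] \<delta> by simp
  then obtain k where k: "1 / real (Suc k) < sqrt (2 * (1 - cos \<delta>)) / 2"
    using reals_Archimedean[of "sqrt (2 * (1 - cos \<delta>)) / 2"] by (auto simp: inverse_eq_divide)
  define \<kappa> where "\<kappa> = 1 / real (Suc k)"
  have \<kappa>: "0 < \<kappa>" "\<kappa> \<le> 1"
    unfolding \<kappa>_def by auto
  have "arccos (- (1 - \<kappa>\<^sup>2 / 8)) < pi"
    using arccos_less_mono[of "- (1 - \<kappa>\<^sup>2 / 8)" "-1"] \<kappa> power_le_one[of \<kappa> 2] by simp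
  then obtain c1 c2 where "geodesic_from (a s) c1" "geodesic_from (a s) c2"
    and angles: "arccos (- (1 - \<kappa>\<^sup>2 / 8)) < alex_angle (a s) (\<lambda>t. a (s + t)) c1"
      "arccos (- (1 - \<kappa>\<^sup>2 / 8)) < alex_angle (a s) (\<lambda>t. a (s + t)) c2" "\<delta> \<le> alex_angle (a s) c1 c2"
    using pair by blast
  then obtain e where e: "0 < e" "unit_geodesic (a s) c1 e" "unit_geodesic (a s) c2 e"
    unfolding geodesic_from_iff_unit_geodesic
    by (metis min.absorb_iff1 min_less_iff_conj nle_le unit_geodesic_shrink)
  have "2 * \<kappa> * t \<le> dist (c1 t) (c2 t)" if "0 < t" "t \<le> e" for t
  proof -
    have "2 * \<kappa> * t \<le> sqrt (2 * (1 - cos \<delta>)) * t"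
      using k that unfolding \<kappa>_def by (intro mult_right_mono) auto
    also have "\<dots> \<le> dist (c1 t) (c2 t)"
      using CAT0_dist_same_time_ge_of_alex_angle_ge[OF cat e(2,3) _ \<delta>(2) angles(3) that] \<delta> by simp
    finally show ?thesis .
  qed
  then obtain c where "line_branch a \<kappa> e s c"
    using CAT0_line_branch_of_diverging_pair[OF cat a \<kappa> e(2,3) angles(1,2)] by blast
  moreover obtain m where "1 / real (Suc m) < e"
    using reals_Archimedean[OF e(1)] by (auto simp: inverse_eq_divide)
  ultimately show ?thesis
    unfolding \<kappa>_def using line_branch_shrink by (meson less_imp_le)
qed

lemma CAT0_countable_omega_plus:
  assumes cat: "CAT0 TYPE('a::metric_space)" and a: "complete_geodesic (a :: real \<Rightarrow> 'a)"
    and lc: "locally_compact_space (euclidean :: 'a topology)"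
  shows "countable (omega_plus a)"
proof -
  let ?B = "\<lambda>k m. {s. \<exists>c. line_branch a (1 / real (Suc k)) (1 / real (Suc m)) s c}"
  have "omega_plus a \<subseteq> (\<Union>k m. a ` ?B k m)"
  proof
    fix p assume "p \<in> omega_plus a"
    then obtain s where p: "p = a s" and "several_inverses (a s) (\<lambda>t. a (s + t))"
      unfolding omega_plus_def by blast
    then obtain k m c where "line_branch a (1 / real (Suc k)) (1 / real (Suc m)) s c"
      using CAT0_several_inverses_imp_line_branch[OF cat a] by blast
    then have "s \<in> ?B k m"
      by blast
    then show "p \<in> (\<Union>k m. a ` ?B k m)"
      unfolding p by blast
  qed
  moreover have "countable (\<Union>k m. a ` ?B k m)"
    by (intro countable_UN countable_image CAT0_countable_line_branch_points[OF cat a lc]) auto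
  ultimately show ?thesis
    by (rule countable_subset)
qed

lemma complete_geodesic_reverse: "complete_geodesic a \<Longrightarrow> complete_geodesic (\<lambda>t. a (- t))"
  unfolding complete_geodesic_def by (simp add: abs_minus_commute)

lemma omega_minus_eq_omega_plus_reverse: "omega_minus a = omega_plus (\<lambda>t. a (- t))"
  unfolding omega_minus_def omega_plus_def
proof (intro Collect_cong iffI)
  fix x
  assume "\<exists>s. x = a s \<and> several_inverses x (\<lambda>t. a (s - t))"
  then obtain s where "x = a s" "several_inverses x (\<lambda>t. a (s - t))"
    by blast
  then show "\<exists>s. x = a (- s) \<and> several_inverses x (\<lambda>t. a (- (s + t)))"
    by (intro exI[of _ "- s"]) simp
next
  fix x
  assume "\<exists>s. x = a (- s) \<and> several_inverses x (\<lambda>t. a (- (s + t)))"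
  then obtain s where "x = a (- s)" "several_inverses x (\<lambda>t. a (- (s + t)))"
    by blast
  then show "\<exists>s. x = a s \<and> several_inverses x (\<lambda>t. a (s - t))"
    by (intro exI[of _ "- s"]) simp
qed

theorem theorem7:
  fixes a :: "real \<Rightarrow> 'a::metric_space"
  assumes "CAT0 TYPE('a)"
    and "geodesically_complete TYPE('a)"
    and "locally_compact_space (euclidean :: 'a topology)"
    and "complete_geodesic a"
  shows "countable (omega_plus a) \<and> countable (omega_minus a)"
proof
  show "countable (omega_plus a)"
    by (rule CAT0_countable_omega_plus[OF assms(1,4,3)])
  show "countable (omega_minus a)"
    unfolding omega_minus_eq_omega_plus_reverse
    by (rule CAT0_countable_omega_plus[OF assms(1) complete_geodesic_reverse[OF assms(4)] assms(3)])
qed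

end
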